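(* Let $\alpha\le N$ and $0<\sigma<N$. There exists $C=C(\Omega,\Sigma,\alpha,\sigma)>0$ such that $$\mathcal N_{\alpha,\sigma}^{-1}(x,y)\le C\big(\mathcal N_{\alpha,\sigma}^{-1}(x,z)+\mathcal N_{\alpha,\sigma}^{-1}(z,y)\big)$$ for all pairwise distinct $x,y,z\in\overline\Omega$.
   Context: $\Omega\subset\mathbb R^N$ ($N\ge3$) is a bounded $C^2$ domain, $\Sigma\subset\partial\Omega$ a compact $C^2$ submanifold without boundary of dimension $k\in\{0,\dots,N-1\}$, $d=\mathrm{dist}(\cdot,\partial\Omega)$, $d_\Sigma=\mathrm{dist}(\cdot,\Sigma)$. For $x,y\in\overline\Omega$, $x\ne y$: $$\mathcal N_{\alpha,\sigma}(x,y):=\frac{\max\{|x-y|,d_\Sigma(x),d_\Sigma(y)\}^\alpha}{|x-y|^{N-\sigma}\max\{|x-y|,d(x),d(y)\}^\sigma},$$ and $\mathcal N^{-1}_{\alpha,\sigma}=1/\mathcal N_{\alpha,\sigma}$. *)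

theory Defs
  imports "HOL-Analysis.Analysis"
begin

definition C1_on :: "'a::euclidean_space set \<Rightarrow> ('a \<Rightarrow> 'b::real_normed_vector) \<Rightarrow> bool" where
  "C1_on U f \<longleftrightarrow> (\<exists>f'. (\<forall>x\<in>U. (f has_derivative blinfun_apply (f' x)) (at x)) \<and> continuous_on U f')"

definition C2_on :: "'a::euclidean_space set \<Rightarrow> ('a \<Rightarrow> 'b::real_normed_vector) \<Rightarrow> bool" where
  "C2_on U f \<longleftrightarrow> (\<exists>f'. (\<forall>x\<in>U. (f has_derivative blinfun_apply (f' x)) (at x)) \<and> C1_on U f')"

text \<open>Bounded C^2 domain: open, bounded, connected, and locally above the graph of a C^2
  function (in rotated coordinates: unit normal direction nu, graph over the hyperplane nu-perp).\<close>
definition C2_bounded_domain :: "'a::euclidean_space set \<Rightarrow> bool" where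
  "C2_bounded_domain \<Omega> \<longleftrightarrow> open \<Omega> \<and> bounded \<Omega> \<and> connected \<Omega> \<and> \<Omega> \<noteq> {} \<and>
     (\<forall>p\<in>frontier \<Omega>. \<exists>r>0. \<exists>\<nu>::'a. \<exists>\<gamma>::'a \<Rightarrow> real. norm \<nu> = 1 \<and> C2_on UNIV \<gamma> \<and>
        \<Omega> \<inter> ball p r = {x\<in>ball p r. x \<bullet> \<nu> > \<gamma> (x - (x \<bullet> \<nu>) *\<^sub>R \<nu>)})"

definition C2_compact_submanifold :: "'a::euclidean_space set \<Rightarrow> nat \<Rightarrow> bool" where
  "C2_compact_submanifold \<Sigma> k \<longleftrightarrow> compact \<Sigma> \<and>
     (\<forall>p\<in>\<Sigma>. \<exists>U \<phi> \<psi> B. open U \<and> p \<in> U \<and> open (\<phi> ` U) \<and>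
        C2_on U (\<phi> :: 'a \<Rightarrow> 'a) \<and> C2_on (\<phi> ` U) (\<psi> :: 'a \<Rightarrow> 'a) \<and>
        (\<forall>x\<in>U. \<psi> (\<phi> x) = x) \<and> (\<forall>y\<in>\<phi> ` U. \<phi> (\<psi> y) = y) \<and>
        B \<subseteq> Basis \<and> card B = k \<and>
        \<phi> ` (\<Sigma> \<inter> U) = \<phi> ` U \<inter> {y. \<forall>i\<in>Basis - B. y \<bullet> i = 0})"

definition kerN :: "'a::euclidean_space set \<Rightarrow> 'a set \<Rightarrow> real \<Rightarrow> real \<Rightarrow> 'a \<Rightarrow> 'a \<Rightarrow> real" where
  "kerN \<Omega> \<Sigma> \<alpha> \<sigma> x y =
     (max (dist x y) (max (infdist x \<Sigma>) (infdist y \<Sigma>))) powr \<alpha> /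
     ((dist x y) powr (real DIM('a) - \<sigma>) *
      (max (dist x y) (max (infdist x (frontier \<Omega>)) (infdist y (frontier \<Omega>)))) powr \<sigma>)"

definition kerN_inv :: "'a::euclidean_space set \<Rightarrow> 'a set \<Rightarrow> real \<Rightarrow> real \<Rightarrow> 'a \<Rightarrow> 'a \<Rightarrow> real" where
  "kerN_inv \<Omega> \<Sigma> \<alpha> \<sigma> x y = 1 / kerN \<Omega> \<Sigma> \<alpha> \<sigma> x y"

end

theory Submission
  imports Defs
begin

text \<open>Only three properties of \<open>d\<close> and \<open>d\<^sub>\<Sigma>\<close> enter: both are 1-Lipschitz, and
  \<open>d \<le> d\<^sub>\<Sigma>\<close> because \<open>\<Sigma> \<subseteq> \<partial>\<Omega>\<close>. By the triangle inequality and symmetry we may assume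
  \<open>|x - y| \<le> 2 |x - z|\<close>. Then each of the three factors of \<open>\<N>\<^sup>-\<^sup>1(x,y)\<close> is comparable with
  the corresponding factor of \<open>\<N>\<^sup>-\<^sup>1(x,z)\<close>, except \<open>max{|x-y|, d\<^sub>\<Sigma>(x), d\<^sub>\<Sigma>(y)}\<^sup>-\<^sup>\<alpha>\<close>
  when \<open>\<alpha> > 0\<close> and \<open>d\<^sub>\<Sigma>(x) < |x - z|\<close>. In that case all lengths occurring in \<open>\<N>\<^sup>-\<^sup>1(x,y)\<close>
  are at most \<open>3 |x - z|\<close>, so \<open>\<N>\<^sup>-\<^sup>1(x,y) \<lesssim> |x - z|\<^sup>N\<^sup>-\<^sup>\<alpha> \<lesssim> \<N>\<^sup>-\<^sup>1(x,z)\<close>, using \<open>\<alpha> \<le> N\<close>.\<close>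

lemma powr_le_mult_powr:
  fixes a b c p :: real
  assumes "0 \<le> p" "0 \<le> a" "0 \<le> b" "a \<le> c * b"
  shows "a powr p \<le> c powr p * b powr p"
  using powr_mono2[OF assms(1,2,4)] by (simp add: powr_mult)

lemma powr_neg_le_mult_powr:
  fixes a b c p :: real
  assumes "p \<le> 0" "0 < a" "0 < b" "0 < c" "b \<le> c * a"
  shows "a powr p \<le> c powr (- p) * b powr p"
proof -
  have "c powr p * a powr p \<le> b powr p"
    using powr_mono2'[OF assms(1,3,5)] by (simp add: powr_mult)
  then show ?thesis
    using assms(4) by (simp add: powr_minus field_simps)
qed

lemma max_dist_le_near:
  fixes f :: "'a::metric_space \<Rightarrow> real"
  assumes "\<And>x y. \<bar>f x - f y\<bar> \<le> dist x y" "dist x y \<le> 2 * dist x z"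
  shows "max (dist x y) (max (f x) (f y)) \<le> 3 * max (dist x z) (max (f x) (f z))"
  using assms(1)[of y x] assms(2) by (auto simp: dist_commute)

locale lipschitz_weighted_kernel =
  fixes \<delta> \<epsilon> :: "'a::metric_space \<Rightarrow> real" and n \<alpha> \<sigma> :: real
  assumes weight_nonneg: "0 \<le> \<delta> x"
    and weight_le: "\<delta> x \<le> \<epsilon> x"
    and \<delta>_lipschitz: "\<bar>\<delta> x - \<delta> y\<bar> \<le> dist x y"
    and \<epsilon>_lipschitz: "\<bar>\<epsilon> x - \<epsilon> y\<bar> \<le> dist x y"
    and sigma_pos: "0 < \<sigma>" and sigma_less: "\<sigma> < n" and alpha_le: "\<alpha> \<le> n"
begin

text \<open>With \<open>\<delta> = d\<close>, \<open>\<epsilon> = d\<^sub>\<Sigma>\<close> and \<open>n = N\<close> this is \<open>\<N>\<^sup>-\<^sup>1\<^sub>\<alpha>\<^sub>,\<^sub>\<sigma>\<close>.\<close>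

definition kernel_inv :: "'a \<Rightarrow> 'a \<Rightarrow> real" where
  "kernel_inv x y = dist x y powr (n - \<sigma>) * max (dist x y) (max (\<delta> x) (\<delta> y)) powr \<sigma>
     * max (dist x y) (max (\<epsilon> x) (\<epsilon> y)) powr (- \<alpha>)"

lemma kernel_inv_commute: "kernel_inv x y = kernel_inv y x"
  by (simp add: kernel_inv_def dist_commute max.commute max.left_commute)

lemma kernel_inv_nonneg: "0 \<le> kernel_inv x y"
  by (simp add: kernel_inv_def)

lemma kernel_inv_le_near_comparable:
  assumes "x \<noteq> y" "x \<noteq> z" "dist x y \<le> 2 * dist x z" "\<alpha> \<le> 0 \<or> dist x z \<le> \<epsilon> x"
  shows "kernel_inv x y \<le> 3 powr (n + \<bar>\<alpha>\<bar>) * kernel_inv x z"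
proof -
  define r s where "r = dist x y" and "s = dist x z"
  define M M' where "M = max r (max (\<delta> x) (\<delta> y))" and "M' = max s (max (\<delta> x) (\<delta> z))"
  define P P' where "P = max r (max (\<epsilon> x) (\<epsilon> y))" and "P' = max s (max (\<epsilon> x) (\<epsilon> z))"
  have "0 < r" "0 < s"
    using assms by (simp_all add: r_def s_def)
  then have "0 < M" "0 < P" "0 < P'"
    by (simp_all add: M_def P_def P'_def less_max_iff_disj)
  have r_le: "r \<le> 3 * s"
    using assms(3) \<open>0 < s\<close> unfolding r_def s_def by linarith
  have M_le: "M \<le> 3 * M'" and P_le: "P \<le> 3 * P'"
    using max_dist_le_near[OF \<delta>_lipschitz assms(3)]
      max_dist_le_near[OF \<epsilon>_lipschitz assms(3)]
    by (auto simp: r_def s_def M_def M'_def P_def P'_def)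
  have "P powr (- \<alpha>) \<le> 3 powr \<bar>\<alpha>\<bar> * P' powr (- \<alpha>)"
  proof (cases "\<alpha> \<le> 0")
    case True
    then show ?thesis
      using powr_le_mult_powr[of "- \<alpha>" P P' 3] P_le \<open>0 < P\<close> \<open>0 < P'\<close> by simp
  next
    case False
    then have "P' \<le> 3 * P"
      using assms(4) \<epsilon>_lipschitz[of z x] by (auto simp: P_def P'_def s_def dist_commute)
    then show ?thesis
      using False powr_neg_le_mult_powr[of "- \<alpha>" P P' 3] \<open>0 < P\<close> \<open>0 < P'\<close> by simp
  qed
  moreover have "r powr (n - \<sigma>) \<le> 3 powr (n - \<sigma>) * s powr (n - \<sigma>)"
    using powr_le_mult_powr[of "n - \<sigma>" r s 3] r_le \<open>0 < r\<close> \<open>0 < s\<close> sigma_less by simp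
  moreover have "M powr \<sigma> \<le> 3 powr \<sigma> * M' powr \<sigma>"
    using powr_le_mult_powr[of \<sigma> M M' 3] M_le \<open>0 < M\<close> sigma_pos by simp
  ultimately have "kernel_inv x y \<le> (3 powr (n - \<sigma>) * s powr (n - \<sigma>))
      * (3 powr \<sigma> * M' powr \<sigma>) * (3 powr \<bar>\<alpha>\<bar> * P' powr (- \<alpha>))"
    unfolding kernel_inv_def r_def M_def P_def by (intro mult_mono) auto
  also have "\<dots> = 3 powr (n + \<bar>\<alpha>\<bar>) * kernel_inv x z"
    by (simp add: kernel_inv_def s_def M'_def P'_def powr_add flip: powr_add[of 3 "n - \<sigma>" \<sigma>])
  finally show ?thesis .
qed

lemma kernel_inv_le_near_far:
  assumes "x \<noteq> y" "dist x y \<le> 2 * dist x z" "\<epsilon> x < dist x z" "0 \<le> \<alpha>"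
  shows "kernel_inv x y \<le> 3 powr n * kernel_inv x z"
proof -
  define r s where "r = dist x y" and "s = dist x z"
  define M M' where "M = max r (max (\<delta> x) (\<delta> y))" and "M' = max s (max (\<delta> x) (\<delta> z))"
  define P P' where "P = max r (max (\<epsilon> x) (\<epsilon> y))" and "P' = max s (max (\<epsilon> x) (\<epsilon> z))"
  have "0 < r" "0 < s"
    using assms weight_nonneg[of x] weight_le[of x] by (auto simp: r_def s_def)
  then have "0 < M" "0 < P" "0 < P'" "s \<le> M'"
    by (simp_all add: M_def M'_def P_def P'_def less_max_iff_disj)
  have "M \<le> P" "r \<le> P"
    using weight_le[of x] weight_le[of y] by (auto simp: M_def P_def)
  have "P \<le> 3 * s" "P' \<le> 3 * s"
    using assms(2,3) \<epsilon>_lipschitz[of y x] \<epsilon>_lipschitz[of z x] \<open>0 < s\<close>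
    by (auto simp: r_def s_def P_def P'_def dist_commute)
  have "kernel_inv x y \<le> P powr (n - \<sigma>) * P powr \<sigma> * P powr (- \<alpha>)"
    unfolding kernel_inv_def r_def [symmetric] M_def [symmetric] P_def [symmetric]
    using \<open>M \<le> P\<close> \<open>r \<le> P\<close> \<open>0 < r\<close> \<open>0 < M\<close> sigma_pos sigma_less
    by (intro mult_right_mono mult_mono powr_mono2) auto
  also have "\<dots> = P powr (n - \<alpha>)"
    by (simp flip: powr_add)
  also have "\<dots> \<le> (3 * s) powr (n - \<alpha>)"
    using \<open>P \<le> 3 * s\<close> \<open>0 < P\<close> alpha_le by (intro powr_mono2) auto
  also have "\<dots> = 3 powr n * (s powr (n - \<sigma>) * s powr \<sigma> * (3 * s) powr (- \<alpha>))"
  proof -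
    have "s powr (n - \<sigma>) * s powr \<sigma> = s powr n"
      by (simp flip: powr_add)
    moreover have "(3 * s) powr (n - \<alpha>) = (3 * s) powr n * (3 * s) powr (- \<alpha>)"
      by (simp flip: powr_add)
    ultimately show ?thesis
      by (simp add: powr_mult)
  qed
  also have "\<dots> \<le> 3 powr n * kernel_inv x z"
    unfolding kernel_inv_def s_def [symmetric] M'_def [symmetric] P'_def [symmetric]
    using \<open>s \<le> M'\<close> \<open>P' \<le> 3 * s\<close> \<open>0 < s\<close> \<open>0 < P'\<close> sigma_pos assms(4)
    by (intro mult_left_mono mult_mono powr_mono2 powr_mono2') auto
  finally show ?thesis .
qed

lemma kernel_inv_le_near:
  assumes "x \<noteq> y" "x \<noteq> z" "dist x y \<le> 2 * dist x z"
  shows "kernel_inv x y \<le> 3 powr (n + \<bar>\<alpha>\<bar>) * kernel_inv x z"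
proof (cases "\<alpha> \<le> 0 \<or> dist x z \<le> \<epsilon> x")
  case True
  then show ?thesis
    using assms by (rule kernel_inv_le_near_comparable[rotated 3])
next
  case False
  then have "kernel_inv x y \<le> 3 powr n * kernel_inv x z"
    using assms by (intro kernel_inv_le_near_far) auto
  also have "\<dots> \<le> 3 powr (n + \<bar>\<alpha>\<bar>) * kernel_inv x z"
    by (intro mult_right_mono kernel_inv_nonneg) (simp add: powr_add ge_one_powr_ge_zero)
  finally show ?thesis .
qed

lemma kernel_inv_quasi_triangle:
  assumes "x \<noteq> y" "x \<noteq> z" "y \<noteq> z"
  shows "kernel_inv x y \<le> 3 powr (n + \<bar>\<alpha>\<bar>) * (kernel_inv x z + kernel_inv z y)"
proof (cases "dist x y \<le> 2 * dist x z")
  case True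
  then have "kernel_inv x y \<le> 3 powr (n + \<bar>\<alpha>\<bar>) * kernel_inv x z"
    using assms by (intro kernel_inv_le_near)
  then show ?thesis
    using kernel_inv_nonneg[of z y] by (simp add: distrib_left add_increasing2)
next
  case False
  then have "dist y x \<le> 2 * dist y z"
    using dist_triangle[of x y z] by (simp add: dist_commute)
  then have "kernel_inv y x \<le> 3 powr (n + \<bar>\<alpha>\<bar>) * kernel_inv y z"
    using assms by (intro kernel_inv_le_near) auto
  then show ?thesis
    using kernel_inv_nonneg[of x z]
    by (simp add: kernel_inv_commute[of y] kernel_inv_commute[of _ x] distrib_left add_increasing)
qed

end

theorem lemma5p2:
  fixes \<Omega> \<Sigma> :: "'a::euclidean_space set" and k :: nat and \<alpha> \<sigma> :: real
  assumes "DIM('a) \<ge> 3"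
    and "C2_bounded_domain \<Omega>"
    and "\<Sigma> \<subseteq> frontier \<Omega>" and "\<Sigma> \<noteq> {}"
    and "k < DIM('a)"
    and "C2_compact_submanifold \<Sigma> k"
    and "\<alpha> \<le> real DIM('a)" and "0 < \<sigma>" and "\<sigma> < real DIM('a)"
  shows "\<exists>C>0. \<forall>x\<in>closure \<Omega>. \<forall>y\<in>closure \<Omega>. \<forall>z\<in>closure \<Omega>.
           x \<noteq> y \<longrightarrow> y \<noteq> z \<longrightarrow> x \<noteq> z \<longrightarrow>
           kerN_inv \<Omega> \<Sigma> \<alpha> \<sigma> x y \<le> C * (kerN_inv \<Omega> \<Sigma> \<alpha> \<sigma> x z + kerN_inv \<Omega> \<Sigma> \<alpha> \<sigma> z y)"
proof -
  interpret K: lipschitz_weighted_kernel "\<lambda>x. infdist x (frontier \<Omega>)" "\<lambda>x. infdist x \<Sigma>"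
    "real DIM('a)" \<alpha> \<sigma>
    using assms(3,4,7-9)
    by unfold_locales (simp_all add: infdist_nonneg infdist_mono infdist_triangle_abs)
  have "kerN_inv \<Omega> \<Sigma> \<alpha> \<sigma> = K.kernel_inv"
    by (intro ext) (simp add: kerN_inv_def kerN_def K.kernel_inv_def powr_minus_divide)
  then show ?thesis
    using K.kernel_inv_quasi_triangle by (intro exI[of _ "3 powr (real DIM('a) + \<bar>\<alpha>\<bar>)"]) auto
qed

end
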